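(* Let $x,y,z$ be local coordinates on a 3-manifold and let $E,K,P$ be functions of $x$ only, $F,L,Q$ functions of $y$ only, $G,M,R$ functions of $z$ only, with $\Delta:=ELR+FMP+GKQ-EMQ-FKR-GLP\neq 0$ and $LR-MQ$, $MP-KR$, $KQ-LP$ nonzero. Consider the Stäckel metric $$g=\frac{\Delta}{LR-MQ}dx^2+\frac{\Delta}{MP-KR}dy^2+\frac{\Delta}{KQ-LP}dz^2$$ and the quadratic forms $$I_2=\frac{\Delta(GQ-FR)}{(LR-MQ)^2}dx^2+\frac{\Delta(ER-GP)}{(MP-KR)^2}dy^2+\frac{\Delta(FP-EQ)}{(KQ-LP)^2}dz^2,$$ $$I_3=\frac{\Delta(FM-GL)}{(LR-MQ)^2}dx^2+\frac{\Delta(GK-EM)}{(MP-KR)^2}dy^2+\frac{\Delta(EL-FK)}{(KQ-LP)^2}dz^2,$$ which are (classically known) first integrals, quadratic in velocities, of the geodesic flow of $g$. Fix constants $\lambda,\mu\in\mathbb{R}$ such that on an open set $U$ the equations $I_2-\lambda g=0$, $I_3-\mu g=0$ define at each point $m\in U$ four distinct real points of $PT_mM$, giving four direction fields $\tau_1,\dots,\tau_4$. Then: the integral curves of each $\tau_i$ are geodesics of $g$; at each point there are three mutually orthogonal planes $\pi_1,\pi_2,\pi_3\subset T_mM$ (namely the tangent planes to the coordinate surfaces $x=\mathrm{const}$, $y=\mathrm{const}$, $z=\mathrm{const}$) such that, for any fixed $k$, the reflections in $\pi_1,\pi_2,\pi_3$ map $\tau_k$ onto the other three directions; and the distributions $\pi_1,\pi_2,\pi_3$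 are integrable.
   Context: Quadratic forms such as $dx^2$ are evaluated on tangent vectors (velocities). A direction field is a smooth field of lines in $TM$. *)

theory Defs
  imports "HOL-Analysis.Analysis"
begin

text \<open>Points of the coordinate chart are p :: real^3 with coordinates
  x = p$1, y = p$2, z = p$3; tangent vectors are v :: real^3 in the
  coordinate frame (d/dx, d/dy, d/dz).\<close>

definition smooth_on :: "real set \<Rightarrow> (real \<Rightarrow> real) \<Rightarrow> bool" where
  "smooth_on S f \<longleftrightarrow> (\<forall>n. \<forall>x\<in>S. ((deriv ^^ n) f) differentiable (at x))"

definition Delta ::
  "(real\<Rightarrow>real) \<Rightarrow> (real\<Rightarrow>real) \<Rightarrow> (real\<Rightarrow>real) \<Rightarrow> (real\<Rightarrow>real) \<Rightarrow> (real\<Rightarrow>real) \<Rightarrow>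
   (real\<Rightarrow>real) \<Rightarrow> (real\<Rightarrow>real) \<Rightarrow> (real\<Rightarrow>real) \<Rightarrow> (real\<Rightarrow>real) \<Rightarrow> real^3 \<Rightarrow> real" where
  "Delta E F G K L M P Q R p =
     (let x = p$1; y = p$2; z = p$3 in
       E x * L y * R z + F y * M z * P x + G z * K x * Q y
     - E x * M z * Q y - F y * K x * R z - G z * L y * P x)"

definition g_coeff ::
  "(real\<Rightarrow>real) \<Rightarrow> (real\<Rightarrow>real) \<Rightarrow> (real\<Rightarrow>real) \<Rightarrow> (real\<Rightarrow>real) \<Rightarrow> (real\<Rightarrow>real) \<Rightarrow>
   (real\<Rightarrow>real) \<Rightarrow> (real\<Rightarrow>real) \<Rightarrow> (real\<Rightarrow>real) \<Rightarrow> (real\<Rightarrow>real) \<Rightarrow> real^3 \<Rightarrow> real^3" where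
  "g_coeff E F G K L M P Q R p =
     (let x = p$1; y = p$2; z = p$3; D = Delta E F G K L M P Q R p in
       vector [D / (L y * R z - M z * Q y),
               D / (M z * P x - K x * R z),
               D / (K x * Q y - L y * P x)])"

definition I2_coeff ::
  "(real\<Rightarrow>real) \<Rightarrow> (real\<Rightarrow>real) \<Rightarrow> (real\<Rightarrow>real) \<Rightarrow> (real\<Rightarrow>real) \<Rightarrow> (real\<Rightarrow>real) \<Rightarrow>
   (real\<Rightarrow>real) \<Rightarrow> (real\<Rightarrow>real) \<Rightarrow> (real\<Rightarrow>real) \<Rightarrow> (real\<Rightarrow>real) \<Rightarrow> real^3 \<Rightarrow> real^3" where
  "I2_coeff E F G K L M P Q R p =
     (let x = p$1; y = p$2; z = p$3; D = Delta E F G K L M P Q R p in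
       vector [D * (G z * Q y - F y * R z) / (L y * R z - M z * Q y)^2,
               D * (E x * R z - G z * P x) / (M z * P x - K x * R z)^2,
               D * (F y * P x - E x * Q y) / (K x * Q y - L y * P x)^2])"

definition I3_coeff ::
  "(real\<Rightarrow>real) \<Rightarrow> (real\<Rightarrow>real) \<Rightarrow> (real\<Rightarrow>real) \<Rightarrow> (real\<Rightarrow>real) \<Rightarrow> (real\<Rightarrow>real) \<Rightarrow>
   (real\<Rightarrow>real) \<Rightarrow> (real\<Rightarrow>real) \<Rightarrow> (real\<Rightarrow>real) \<Rightarrow> (real\<Rightarrow>real) \<Rightarrow> real^3 \<Rightarrow> real^3" where
  "I3_coeff E F G K L M P Q R p =
     (let x = p$1; y = p$2; z = p$3; D = Delta E F G K L M P Q R p in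
       vector [D * (F y * M z - G z * L y) / (L y * R z - M z * Q y)^2,
               D * (G z * K x - E x * M z) / (M z * P x - K x * R z)^2,
               D * (E x * L y - F y * K x) / (K x * Q y - L y * P x)^2])"

definition diag_quad :: "real^3 \<Rightarrow> real^3 \<Rightarrow> real" where
  "diag_quad a v = (\<Sum>i\<in>UNIV. a$i * (v$i)^2)"

definition diag_mat :: "real^3 \<Rightarrow> real^3^3" where
  "diag_mat a = (\<chi> i j. if i = j then a$i else 0)"

definition bilin :: "(real^3 \<Rightarrow> real^3^3) \<Rightarrow> real^3 \<Rightarrow> real^3 \<Rightarrow> real^3 \<Rightarrow> real" where
  "bilin Gm p u v = (\<Sum>i\<in>UNIV. \<Sum>j\<in>UNIV. Gm p $ i $ j * u$i * v$j)"

definition partial :: "3 \<Rightarrow> (real^3 \<Rightarrow> real) \<Rightarrow> real^3 \<Rightarrow> real" where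
  "partial i f p = deriv (\<lambda>t. f (p + t *\<^sub>R axis i 1)) 0"

definition christoffel :: "(real^3 \<Rightarrow> real^3^3) \<Rightarrow> 3 \<Rightarrow> 3 \<Rightarrow> 3 \<Rightarrow> real^3 \<Rightarrow> real" where
  "christoffel Gm k i j p = (1/2) * (\<Sum>l\<in>UNIV. matrix_inv (Gm p) $ k $ l *
      (partial i (\<lambda>q. Gm q $ j $ l) p + partial j (\<lambda>q. Gm q $ i $ l) p
       - partial l (\<lambda>q. Gm q $ i $ j) p))"

text \<open>A twice differentiable curve c (velocity c', acceleration c'') on an interval I is an
  unparametrized geodesic (pregeodesic): its covariant acceleration is everywhere proportional
  to its velocity, i.e. its trace is the trace of a geodesic.\<close>
definition pregeodesic :: "(real^3 \<Rightarrow> real^3^3) \<Rightarrow> real set \<Rightarrow> (real \<Rightarrow> real^3) \<Rightarrow>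
    (real \<Rightarrow> real^3) \<Rightarrow> (real \<Rightarrow> real^3) \<Rightarrow> bool" where
  "pregeodesic Gm I c c' c'' \<longleftrightarrow>
     (\<forall>t\<in>I. \<exists>a::real. \<forall>k.
        c'' t $ k + (\<Sum>i\<in>UNIV. \<Sum>j\<in>UNIV. christoffel Gm k i j (c t) * c' t $ i * c' t $ j)
          = a * c' t $ k)"

definition g_perp :: "(real^3 \<Rightarrow> real^3^3) \<Rightarrow> real^3 \<Rightarrow> (real^3) set \<Rightarrow> (real^3) set" where
  "g_perp Gm p S = {n. \<forall>u\<in>S. bilin Gm p u n = 0}"

definition g_reflect :: "(real^3 \<Rightarrow> real^3^3) \<Rightarrow> real^3 \<Rightarrow> (real^3) set \<Rightarrow> real^3 \<Rightarrow> real^3" where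
  "g_reflect Gm p \<pi> v =
     (let n = (SOME n. n \<in> g_perp Gm p \<pi> \<and> n \<noteq> 0) in
        v - (2 * bilin Gm p v n / bilin Gm p n n) *\<^sub>R n)"

text \<open>The tangent plane at any point to the coordinate surface {x_i = const}.\<close>
definition coord_plane :: "3 \<Rightarrow> (real^3) set" where
  "coord_plane i = {v. v $ i = 0}"

text \<open>A (codimension one) distribution D on the open set U is integrable: locally it is the
  kernel of the differential of a C^1 function with nonvanishing differential, i.e. it is
  tangent to the level surfaces of that function (Frobenius).\<close>
definition integrable_distribution :: "(real^3) set \<Rightarrow> (real^3 \<Rightarrow> (real^3) set) \<Rightarrow> bool" where
  "integrable_distribution U D \<longleftrightarrow>
     (\<forall>m\<in>U. \<exists>V f grad. open V \<and> m \<in> V \<and> V \<subseteq> U \<and> continuous_on V grad \<and>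
        (\<forall>q\<in>V. (f has_derivative (\<lambda>v. grad q \<bullet> v)) (at q) \<and> grad q \<noteq> 0 \<and>
                D q = {v. grad q \<bullet> v = 0}))"

end

theory Submission
  imports Defs
begin

unbundle cross3_syntax

text \<open>
  Write e = (E,F,G), a = (K,L,M), b = (P,Q,R) for the columns of the Staeckel matrix and
  C = a \<times> b. The metric has coefficients g_i = \<Delta>/C_i, and I_2, I_3 have coefficients r_i g_i and
  s_i g_i with r = (b \<times> e)/C and s = (e \<times> a)/C componentwise. Both satisfy the Killing identity
  \<partial>_k r_i g_i = (r_i - r_k) \<partial>_k g_i, so along any curve x the derivative of
  \<Sum>_i (r_i - \<lambda>) g_i x'_i^2 is 2 \<Sum>_i (r_i - \<lambda>) g_i x'_i z_i, where z is the covariant acceleration.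
  If x' stays in the common null cone of I_2 - \<lambda> g and I_3 - \<mu> g, then z is orthogonal to the same
  two vectors ((r_i - \<lambda>) g_i x'_i) and ((s_i - \<mu>) g_i x'_i) as x'. When the cone consists of exactly
  four lines these two vectors are independent, hence z is parallel to x' and x is a pregeodesic.
  The cone is invariant under changing the sign of one coordinate, i.e. under the g-reflections in
  the coordinate planes, and squaring coordinates shows that four lines can only be the sign
  changes of one of them.
\<close>

section \<open>Null cones of two diagonal quadratic forms\<close>

definition diag_null_cone :: "real^3 \<Rightarrow> real^3 \<Rightarrow> (real^3) set" where
  "diag_null_cone \<alpha> \<beta> = {v. v \<noteq> 0 \<and> diag_quad \<alpha> v = 0 \<and> diag_quad \<beta> v = 0}"

definition flip_coord :: "3 \<Rightarrow> real^3 \<Rightarrow> real^3" where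
  "flip_coord i v = (\<chi> j. if j = i then - v$j else v$j)"

lemma diag_quad_eq_inner: "diag_quad \<alpha> v = \<alpha> \<bullet> (v * v)"
  by (simp add: diag_quad_def inner_vec_def power2_eq_square)

lemma diag_quad_diff: "diag_quad a v - c * diag_quad b v = diag_quad (a - c *\<^sub>R b) v"
  by (simp add: diag_quad_def sum_subtractf sum_distrib_left algebra_simps)

lemma span_singleton_scaleR:
  fixes x :: "'a::real_vector"
  assumes "c \<noteq> 0"
  shows "span {c *\<^sub>R x} = span {x}"
proof -
  have "range (\<lambda>k. k *\<^sub>R (c *\<^sub>R x)) = range (\<lambda>k. k *\<^sub>R x)"
  proof (intro equalityI image_subsetI)
    show "k *\<^sub>R x \<in> range (\<lambda>k. k *\<^sub>R (c *\<^sub>R x))" for k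
      using assms by (intro image_eqI[of _ _ "k / c"]) auto
  qed auto
  then show ?thesis by (simp add: span_singleton)
qed

lemma span_singleton_uminus: "span {- x} = span {x}"
  using span_singleton_scaleR[of "-1" x] by simp

lemma span_singleton_eq_imp_scaleR:
  fixes x y :: "'a::real_vector"
  assumes "span {x} = span {y}"
  obtains c where "y = c *\<^sub>R x"
proof -
  have "y \<in> span {x}" using assms span_base[of y "{y}"] by simp
  then show ?thesis using that unfolding span_singleton by blast
qed

lemma cross_eq_0_imp_scaleR:
  fixes x y :: "real^3"
  assumes "x \<noteq> 0" "x \<times> y = 0"
  shows "y = ((x \<bullet> y) / (x \<bullet> x)) *\<^sub>R x"
proof (rule cross_dot_cancel[OF _ _ assms(1)])
  show "x \<bullet> y = x \<bullet> (((x \<bullet> y) / (x \<bullet> x)) *\<^sub>R x)"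
    using assms(1) by simp
  show "x \<times> y = x \<times> (((x \<bullet> y) / (x \<bullet> x)) *\<^sub>R x)"
    using assms(2) by (simp add: cross_mult_right)
qed

lemma orthogonal_pair_imp_scaleR_cross:
  fixes A B x :: "real^3"
  assumes "A \<bullet> x = 0" "B \<bullet> x = 0" "A \<times> B \<noteq> 0"
  shows "x = (((A \<times> B) \<bullet> x) / ((A \<times> B) \<bullet> (A \<times> B))) *\<^sub>R (A \<times> B)"
proof (rule cross_eq_0_imp_scaleR[OF assms(3)])
  show "(A \<times> B) \<times> x = 0"
    using Lagrange[of x A B] cross_skew[of "A \<times> B" x] assms(1,2) by (simp add: inner_commute)
qed

lemma flip_coord_times_self: "flip_coord i v * flip_coord i v = v * v"
  by (simp add: flip_coord_def vec_eq_iff)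

lemma flip_coord_flip_coord: "flip_coord i (flip_coord i v) = v"
  by (simp add: flip_coord_def vec_eq_iff)

lemma flip_coord_in_diag_null_cone:
  "v \<in> diag_null_cone \<alpha> \<beta> \<Longrightarrow> flip_coord i v \<in> diag_null_cone \<alpha> \<beta>"
proof -
  assume v: "v \<in> diag_null_cone \<alpha> \<beta>"
  have "flip_coord i 0 = 0" by (simp add: flip_coord_def vec_eq_iff)
  then have "flip_coord i v \<noteq> 0"
    using v flip_coord_flip_coord[of i v] by (auto simp: diag_null_cone_def)
  with v show ?thesis
    by (simp add: diag_null_cone_def diag_quad_eq_inner flip_coord_times_self)
qed

(* Coordinatewise square roots of the segment from s to t give a continuum of lines on the cone. *)
lemma infinite_diag_null_cone_lines:
  fixes \<alpha> \<beta> s t :: "real^3"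
  assumes s: "\<forall>i. 0 \<le> s$i" "\<alpha> \<bullet> s = 0" "\<beta> \<bullet> s = 0"
    and t: "\<forall>i. 0 \<le> t$i" "\<alpha> \<bullet> t = 0" "\<beta> \<bullet> t = 0"
    and st: "s \<times> t \<noteq> 0"
  shows "infinite ((\<lambda>v. span {v}) ` diag_null_cone \<alpha> \<beta>)"
proof -
  define u where "u \<epsilon> = (1 - \<epsilon>) *\<^sub>R s + \<epsilon> *\<^sub>R t" for \<epsilon>
  define root where "root \<epsilon> = (\<chi> i. sqrt (u \<epsilon> $ i))" for \<epsilon>
  have u_cross: "u a \<times> u b = (b - a) *\<^sub>R (s \<times> t)" for a b
    unfolding u_def by (simp add: vec_eq_iff forall_3 cross_components algebra_simps)
  have u_nonneg: "0 \<le> u \<epsilon> $ i" if "\<epsilon> \<in> {0<..<1}" for \<epsilon> i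
    using that s(1) t(1) by (simp add: u_def)
  have root_sq: "root \<epsilon> * root \<epsilon> = u \<epsilon>" if "\<epsilon> \<in> {0<..<1}" for \<epsilon>
    using u_nonneg[OF that] by (simp add: root_def vec_eq_iff)
  have root_in: "root \<epsilon> \<in> diag_null_cone \<alpha> \<beta>" if \<epsilon>: "\<epsilon> \<in> {0<..<1}" for \<epsilon>
  proof -
    have "u \<epsilon> \<noteq> 0" using u_cross[of \<epsilon> 0] st \<epsilon> by auto
    then have "root \<epsilon> \<noteq> 0" using root_sq[OF \<epsilon>] by auto
    then show ?thesis
      using s t root_sq[OF \<epsilon>] by (simp add: diag_null_cone_def diag_quad_eq_inner u_def inner_add_right)
  qed
  have inj: "inj_on (\<lambda>\<epsilon>. span {root \<epsilon>}) {0<..<1}"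
  proof (rule inj_onI)
    fix a b assume a: "a \<in> {0<..<1}" and b: "b \<in> {0<..<1}"
      and eq: "span {root a} = span {root b}"
    obtain c where "root b = c *\<^sub>R root a" using span_singleton_eq_imp_scaleR[OF eq] .
    then have "root b * root b = (c * c) *\<^sub>R (root a * root a)"
      by (simp add: vec_eq_iff)
    then have "u b = (c * c) *\<^sub>R u a" using root_sq[OF a] root_sq[OF b] by simp
    then have "u a \<times> u b = 0" by (simp add: cross_mult_right)
    then show "a = b" using u_cross[of a b] st by simp
  qed
  have "infinite ((\<lambda>\<epsilon>. span {root \<epsilon>}) ` {0<..<1})"
    using finite_imageD[OF _ inj] infinite_Ioo[of "0::real" 1] by auto
  moreover have "(\<lambda>\<epsilon>. span {root \<epsilon>}) ` {0<..<1} \<subseteq> (\<lambda>v. span {v}) ` diag_null_cone \<alpha> \<beta>"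
    using root_in by blast
  ultimately show ?thesis
    using finite_subset by blast
qed

lemma diag_null_cone_times_self_nonzero:
  assumes "v \<in> diag_null_cone \<alpha> \<beta>"
  shows "v * v \<noteq> 0"
proof
  assume "v * v = 0"
  then have "v = 0" by (simp add: vec_eq_iff)
  with assms show False by (simp add: diag_null_cone_def)
qed

lemma times_self_proportional_if_finite_lines:
  assumes fin: "finite ((\<lambda>v. span {v}) ` diag_null_cone \<alpha> \<beta>)"
    and v: "v \<in> diag_null_cone \<alpha> \<beta>" and w: "w \<in> diag_null_cone \<alpha> \<beta>"
  obtains c where "c > 0" "w * w = c *\<^sub>R (v * v)"
proof -
  have kernel: "\<alpha> \<bullet> (x * x) = 0" "\<beta> \<bullet> (x * x) = 0" if "x \<in> diag_null_cone \<alpha> \<beta>" for x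
    using that by (simp_all add: diag_null_cone_def diag_quad_eq_inner)
  have cross0: "(v * v) \<times> (w * w) = 0"
  proof (rule ccontr)
    assume "(v * v) \<times> (w * w) \<noteq> 0"
    then have "infinite ((\<lambda>v. span {v}) ` diag_null_cone \<alpha> \<beta>)"
      using kernel[OF v] kernel[OF w] by (intro infinite_diag_null_cone_lines) simp_all
    with fin show False by simp
  qed
  define c where "c = ((v * v) \<bullet> (w * w)) / ((v * v) \<bullet> (v * v))"
  have ww: "w * w = c *\<^sub>R (v * v)"
    unfolding c_def by (rule cross_eq_0_imp_scaleR[OF diag_null_cone_times_self_nonzero[OF v] cross0])
  obtain i where "w $ i \<noteq> 0"
    using w by (auto simp: diag_null_cone_def vec_eq_iff)
  then have "0 < (w * w) $ i"
    using not_real_square_gt_zero unfolding vector_mult_component by blast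
  then have pos: "0 < c * (v $ i * v $ i)" using ww by simp
  have "c > 0"
  proof (rule ccontr)
    assume "\<not> c > 0"
    then have "c * (v $ i * v $ i) \<le> 0" by (simp add: mult_nonpos_nonneg)
    with pos show False by simp
  qed
  with ww that show ?thesis by blast
qed

lemma times_self_eq_imp_span_flip:
  fixes u v :: "real^3"
  assumes "u * u = v * v"
  shows "span {u} \<in> insert (span {v}) (range (\<lambda>i. span {flip_coord i v}))"
proof -
  have sign: "u $ i = v $ i \<or> u $ i = - v $ i" for i
    using assms by (simp add: vec_eq_iff square_eq_iff)
  have "u = v \<or> u = - v \<or> u = flip_coord 1 v \<or> u = - flip_coord 1 v \<or>
      u = flip_coord 2 v \<or> u = - flip_coord 2 v \<or> u = flip_coord 3 v \<or> u = - flip_coord 3 v"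
    using sign[of 1] sign[of 2] sign[of 3] unfolding vec_eq_iff forall_3 flip_coord_def by auto
  then have "span {u} \<in> {span {v}, span {flip_coord 1 v}, span {flip_coord 2 v}, span {flip_coord 3 v}}"
    by (elim disjE) (simp_all add: span_singleton_uminus)
  then show ?thesis
    by (simp add: UNIV_3)
qed

lemma diag_null_cone_lines_eq_flips:
  assumes fin: "finite ((\<lambda>v. span {v}) ` diag_null_cone \<alpha> \<beta>)" and v: "v \<in> diag_null_cone \<alpha> \<beta>"
  shows "(\<lambda>v. span {v}) ` diag_null_cone \<alpha> \<beta> = insert (span {v}) (range (\<lambda>i. span {flip_coord i v}))"
proof (intro equalityI subsetI)
  fix X assume "X \<in> (\<lambda>v. span {v}) ` diag_null_cone \<alpha> \<beta>"
  then obtain w where w: "w \<in> diag_null_cone \<alpha> \<beta>" and X: "X = span {w}" by blast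
  obtain c where c: "c > 0" "w * w = c *\<^sub>R (v * v)"
    using times_self_proportional_if_finite_lines[OF fin v w] .
  define u where "u = (1 / sqrt c) *\<^sub>R w"
  have "u * u = v * v"
    using c by (simp add: u_def vec_eq_iff)
  moreover have "span {u} = X"
    unfolding u_def X using c(1) by (intro span_singleton_scaleR) simp
  ultimately show "X \<in> insert (span {v}) (range (\<lambda>i. span {flip_coord i v}))"
    using times_self_eq_imp_span_flip by metis
next
  fix X assume "X \<in> insert (span {v}) (range (\<lambda>i. span {flip_coord i v}))"
  then show "X \<in> (\<lambda>v. span {v}) ` diag_null_cone \<alpha> \<beta>"
    using v flip_coord_in_diag_null_cone[OF v] by blast
qed

lemma four_diag_null_cone_lines:
  assumes four: "card ((\<lambda>v. span {v}) ` diag_null_cone \<alpha> \<beta>) = 4" and v: "v \<in> diag_null_cone \<alpha> \<beta>"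
  shows "(\<lambda>v. span {v}) ` diag_null_cone \<alpha> \<beta> - {span {v}} = range (\<lambda>i. span {flip_coord i v})"
    and "\<forall>i. v $ i \<noteq> 0"
proof -
  have fin: "finite ((\<lambda>v. span {v}) ` diag_null_cone \<alpha> \<beta>)"
    using four by (intro card_ge_0_finite) simp
  let ?R = "range (\<lambda>i. span {flip_coord i v})"
  have R3: "card ?R \<le> 3"
    using card_image_le[of UNIV "\<lambda>i. span {flip_coord i v}"] by simp
  have notin: "span {v} \<notin> ?R"
  proof
    assume "span {v} \<in> ?R"
    then have "(\<lambda>v. span {v}) ` diag_null_cone \<alpha> \<beta> = ?R"
      using diag_null_cone_lines_eq_flips[OF fin v] by blast
    with four R3 show False by simp
  qed
  then show "(\<lambda>v. span {v}) ` diag_null_cone \<alpha> \<beta> - {span {v}} = ?R"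
    using diag_null_cone_lines_eq_flips[OF fin v] by blast
  show "\<forall>i. v $ i \<noteq> 0"
  proof (intro allI notI)
    fix i assume "v $ i = 0"
    then have "flip_coord i v = v" by (simp add: flip_coord_def vec_eq_iff)
    with notin show False by (metis rangeI)
  qed
qed

lemma common_kernel_second_vector:
  fixes \<alpha> \<beta> s :: "real^3"
  assumes "\<alpha> \<times> \<beta> = 0" "\<alpha> \<bullet> s = 0" "\<beta> \<bullet> s = 0" "s \<noteq> 0"
  obtains t where "\<alpha> \<bullet> t = 0" "\<beta> \<bullet> t = 0" "s \<times> t \<noteq> 0"
proof -
  have nonzero_case: "\<exists>t. a \<bullet> t = 0 \<and> b \<bullet> t = 0 \<and> s \<times> t \<noteq> 0"
    if "a \<noteq> 0" "a \<times> b = 0" "a \<bullet> s = 0" for a b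
  proof (intro exI conjI)
    have b: "b = ((a \<bullet> b) / (a \<bullet> a)) *\<^sub>R a"
      by (rule cross_eq_0_imp_scaleR[OF that(1,2)])
    show "a \<bullet> (a \<times> s) = 0" by (rule dot_cross_self(1))
    then show "b \<bullet> (a \<times> s) = 0" by (subst b) simp
    have "s \<times> (a \<times> s) = (s \<bullet> s) *\<^sub>R a"
      using Lagrange[of s a s] that(3) by (simp add: inner_commute)
    then show "s \<times> (a \<times> s) \<noteq> 0" using that(1) assms(4) by simp
  qed
  consider "\<alpha> \<noteq> 0" | "\<beta> \<noteq> 0" | "\<alpha> = 0" "\<beta> = 0" by blast
  then have "\<exists>t. \<alpha> \<bullet> t = 0 \<and> \<beta> \<bullet> t = 0 \<and> s \<times> t \<noteq> 0"
  proof cases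
    case 1
    then show ?thesis using nonzero_case assms(1,2) by blast
  next
    case 2
    have "\<beta> \<times> \<alpha> = 0" using assms(1) cross_skew[of \<beta> \<alpha>] by simp
    then show ?thesis using nonzero_case[OF 2 _ assms(3)] by blast
  next
    case 3
    then show ?thesis using cross_basis_nonzero[OF assms(4)] by auto
  qed
  with that show ?thesis by blast
qed

(* Otherwise a second kernel vector t could be added to the positive vector v * v without leaving
   the nonnegative orthant. *)
lemma four_diag_null_cone_lines_independent:
  assumes four: "card ((\<lambda>v. span {v}) ` diag_null_cone \<alpha> \<beta>) = 4" and v: "v \<in> diag_null_cone \<alpha> \<beta>"
  shows "\<alpha> \<times> \<beta> \<noteq> 0"
proof
  assume dep: "\<alpha> \<times> \<beta> = 0"
  define s where "s = v * v"
  have s_pos: "0 < s $ i" for i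
    using four_diag_null_cone_lines(2)[OF four v] not_real_square_gt_zero
    unfolding s_def vector_mult_component by blast
  have s_ker: "\<alpha> \<bullet> s = 0" "\<beta> \<bullet> s = 0"
    using v by (simp_all add: s_def diag_null_cone_def diag_quad_eq_inner)
  have "s \<noteq> 0"
    using s_pos[of 1] by auto
  then obtain t where t: "\<alpha> \<bullet> t = 0" "\<beta> \<bullet> t = 0" "s \<times> t \<noteq> 0"
    using common_kernel_second_vector[OF dep s_ker] by blast
  define M where "M = (\<Sum>i\<in>UNIV. \<bar>t $ i\<bar> / s $ i)"
  have bound: "\<bar>t $ i\<bar> \<le> M * s $ i" for i
  proof -
    have "\<bar>t $ i\<bar> / s $ i \<le> M"
      unfolding M_def using s_pos by (intro member_le_sum) (simp_all add: less_imp_le)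
    then show ?thesis using s_pos[of i] by (simp add: divide_le_eq)
  qed
  have "0 \<le> (M *\<^sub>R s + t) $ i" for i
    using bound[of i] abs_ge_minus_self[of "t $ i"] by simp
  moreover have "s \<times> (M *\<^sub>R s + t) = s \<times> t"
    by (simp add: cross_add_right cross_mult_right)
  ultimately have "infinite ((\<lambda>v. span {v}) ` diag_null_cone \<alpha> \<beta>)"
    using s_pos s_ker t by (intro infinite_diag_null_cone_lines[of s _ _ "M *\<^sub>R s + t"])
      (simp_all add: less_imp_le inner_add_right)
  then show False using four by (simp add: card_eq_0_iff)
qed

section \<open>Coordinate planes of a diagonal metric\<close>

lemma sum_UNIV_eq_single:
  fixes f :: "'n::finite \<Rightarrow> 'a::comm_monoid_add"
  assumes "\<And>l. l \<noteq> i \<Longrightarrow> f l = 0"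
  shows "(\<Sum>l\<in>UNIV. f l) = f i"
proof -
  have "(\<Sum>l\<in>UNIV. f l) = (\<Sum>l\<in>UNIV. if l = i then f i else 0)"
    using assms by (intro sum.cong) auto
  then show ?thesis by simp
qed

lemma bilin_diag_mat: "bilin (\<lambda>q. diag_mat (a q)) p u v = (\<Sum>i\<in>UNIV. a p $ i * u $ i * v $ i)"
  unfolding bilin_def diag_mat_def
  by (simp add: if_distrib[of "\<lambda>x. x * _"] cong: if_cong)

lemma g_perp_diag_mat_coord_plane:
  fixes a :: "real^3 \<Rightarrow> real^3"
  assumes "\<forall>l. a p $ l \<noteq> 0"
  shows "g_perp (\<lambda>q. diag_mat (a q)) p (coord_plane i) = {n. \<forall>l. l \<noteq> i \<longrightarrow> n $ l = 0}"
proof (intro equalityI subsetI CollectI allI impI)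
  fix n l assume n: "n \<in> g_perp (\<lambda>q. diag_mat (a q)) p (coord_plane i)" and l: "l \<noteq> i"
  have "axis l 1 \<in> coord_plane i" using l by (simp add: coord_plane_def axis_def)
  then have "bilin (\<lambda>q. diag_mat (a q)) p (axis l 1) n = 0"
    using n by (simp add: g_perp_def)
  moreover have "bilin (\<lambda>q. diag_mat (a q)) p (axis l 1) n = a p $ l * n $ l"
    unfolding bilin_diag_mat by (subst sum_UNIV_eq_single[of l]) (simp_all add: axis_def)
  ultimately show "n $ l = 0" using assms by simp
next
  fix n :: "real^3" assume n: "n \<in> {n. \<forall>l. l \<noteq> i \<longrightarrow> n $ l = 0}"
  have "bilin (\<lambda>q. diag_mat (a q)) p u n = 0" if "u $ i = 0" for u
    unfolding bilin_diag_mat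
  proof (intro sum.neutral ballI)
    show "a p $ j * u $ j * n $ j = 0" for j
      using n that by (cases "j = i") auto
  qed
  then show "n \<in> g_perp (\<lambda>q. diag_mat (a q)) p (coord_plane i)"
    by (simp add: g_perp_def coord_plane_def)
qed

lemma g_perp_coord_planes_orthogonal:
  fixes a :: "real^3 \<Rightarrow> real^3"
  assumes "\<forall>l. a p $ l \<noteq> 0" "i \<noteq> j"
    and "n1 \<in> g_perp (\<lambda>q. diag_mat (a q)) p (coord_plane i)"
    and "n2 \<in> g_perp (\<lambda>q. diag_mat (a q)) p (coord_plane j)"
  shows "bilin (\<lambda>q. diag_mat (a q)) p n1 n2 = 0"
  unfolding bilin_diag_mat
proof (intro sum.neutral ballI)
  show "a p $ m * n1 $ m * n2 $ m = 0" for m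
    using assms unfolding g_perp_diag_mat_coord_plane[of a p, OF assms(1)] by (cases "m = i") auto
qed

lemma g_reflect_coord_plane:
  fixes a :: "real^3 \<Rightarrow> real^3"
  assumes a: "\<forall>l. a p $ l \<noteq> 0"
  shows "g_reflect (\<lambda>q. diag_mat (a q)) p (coord_plane i) v = flip_coord i v"
proof -
  let ?Gm = "\<lambda>q. diag_mat (a q)"
  define n where "n = (SOME n. n \<in> g_perp ?Gm p (coord_plane i) \<and> n \<noteq> 0)"
  have "axis i 1 \<in> g_perp ?Gm p (coord_plane i)"
    unfolding g_perp_diag_mat_coord_plane[of a p, OF a] by (simp add: axis_def)
  moreover have "axis i (1::real) \<noteq> 0" by simp
  ultimately have "\<exists>n. n \<in> g_perp ?Gm p (coord_plane i) \<and> n \<noteq> 0" by blast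
  then have "n \<in> g_perp ?Gm p (coord_plane i) \<and> n \<noteq> 0"
    unfolding n_def by (rule someI_ex)
  then have n: "\<And>l. l \<noteq> i \<Longrightarrow> n $ l = 0" and ni: "n $ i \<noteq> 0"
    unfolding g_perp_diag_mat_coord_plane[of a p, OF a] by (auto simp: vec_eq_iff)
  have "bilin ?Gm p u n = a p $ i * u $ i * n $ i" for u
    unfolding bilin_diag_mat by (rule sum_UNIV_eq_single) (simp add: n)
  then have "bilin ?Gm p v n = a p $ i * v $ i * n $ i" "bilin ?Gm p n n = a p $ i * n $ i * n $ i"
    by simp_all
  then have coeff: "2 * bilin ?Gm p v n / bilin ?Gm p n n = 2 * v $ i / n $ i"
    using a ni by (simp add: field_simps)
  have "g_reflect ?Gm p (coord_plane i) v = v - (2 * v $ i / n $ i) *\<^sub>R n"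
    by (simp only: g_reflect_def Let_def n_def[symmetric] coeff)
  also have "\<dots> = flip_coord i v"
    unfolding vec_eq_iff
  proof
    fix l
    show "(v - (2 * v $ i / n $ i) *\<^sub>R n) $ l = flip_coord i v $ l"
    proof (cases "l = i")
      case True
      then show ?thesis using ni by (simp add: flip_coord_def)
    next
      case False
      then show ?thesis using n[OF False] by (simp add: flip_coord_def)
    qed
  qed
  finally show ?thesis .
qed

lemma integrable_distribution_coord_plane:
  assumes "open U"
  shows "integrable_distribution U (\<lambda>p. coord_plane i)"
  unfolding integrable_distribution_def
proof
  fix m assume "m \<in> U"
  have "((\<lambda>q. q $ i) has_derivative (\<lambda>v. axis i 1 \<bullet> v)) (at q)" for q :: "real^3"
    using bounded_linear_imp_has_derivative[OF bounded_linear_vec_nth] by (simp add: inner_axis')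
  moreover have "coord_plane i = {v. axis i 1 \<bullet> v = 0}"
    by (simp add: coord_plane_def inner_axis')
  ultimately show "\<exists>V f grad. open V \<and> m \<in> V \<and> V \<subseteq> U \<and> continuous_on V grad \<and>
      (\<forall>q\<in>V. (f has_derivative (\<lambda>v. grad q \<bullet> v)) (at q) \<and> grad q \<noteq> 0 \<and> coord_plane i = {v. grad q \<bullet> v = 0})"
    using assms \<open>m \<in> U\<close> by (intro exI[of _ U] exI[of _ "\<lambda>q. q $ i"] exI[of _ "\<lambda>q. axis i 1"]) auto
qed

lemma smooth_on_imp_differentiable: "smooth_on S f \<Longrightarrow> x \<in> S \<Longrightarrow> f differentiable (at x)"
  unfolding smooth_on_def by (metis funpow_0)

lemma partial_eq_has_derivative:
  assumes "(f has_derivative f') (at p)"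
  shows "partial i f p = f' (axis i 1)"
proof -
  have line: "((\<lambda>t. p + t *\<^sub>R axis i 1) has_derivative (\<lambda>h. h *\<^sub>R axis i 1)) (at 0)"
    by (auto intro!: derivative_eq_intros)
  have "((\<lambda>t. f (p + t *\<^sub>R axis i 1)) has_derivative (\<lambda>h. f' (h *\<^sub>R axis i 1))) (at 0)"
    using diff_chain_at[OF line, of f f'] assms by (simp add: o_def)
  moreover have "f' (h *\<^sub>R axis i 1) = f' (axis i 1) * h" for h
    using linear_scale[OF has_derivative_linear[OF assms]] by simp
  ultimately have "((\<lambda>t. f (p + t *\<^sub>R axis i 1)) has_real_derivative f' (axis i 1)) (at 0)"
    by (simp add: has_field_derivative_def)
  then show ?thesis
    unfolding partial_def by (rule DERIV_imp_deriv)
qed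

lemma partial_divide:
  fixes f g :: "real^3 \<Rightarrow> real"
  assumes "(f has_derivative f') (at p)" "(g has_derivative g') (at p)" "g p \<noteq> 0"
  shows "partial k (\<lambda>q. f q / g q) p = (f' (axis k 1) * g p - f p * g' (axis k 1)) / (g p * g p)"
  using partial_eq_has_derivative[OF has_derivative_divide'[OF assms]] .

lemma has_derivative_eq_sum_partials:
  fixes f :: "real^3 \<Rightarrow> real"
  assumes "(f has_derivative f') (at p)"
  shows "f' v = (\<Sum>k\<in>UNIV. v $ k * partial k f p)"
proof -
  interpret bounded_linear f' using has_derivative_bounded_linear[OF assms] .
  have "f' v = f' (\<Sum>k\<in>UNIV. v $ k *\<^sub>R axis k 1)"
    using basis_expansion[of v] by (simp add: scalar_mult_eq_scaleR)
  also have "\<dots> = (\<Sum>k\<in>UNIV. v $ k * f' (axis k 1))"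
    by (simp add: sum scaleR)
  finally show ?thesis
    by (simp add: partial_eq_has_derivative[OF assms])
qed

lemma has_real_derivative_along_curve:
  fixes f :: "real^3 \<Rightarrow> real"
  assumes "f differentiable (at (c t))" and "(c has_vector_derivative v) (at t)"
  shows "((\<lambda>s. f (c s)) has_real_derivative (\<Sum>k\<in>UNIV. v $ k * partial k f (c t))) (at t)"
proof -
  obtain f' where f': "(f has_derivative f') (at (c t))"
    using assms(1) by (auto simp: differentiable_def)
  have "((\<lambda>s. f (c s)) has_derivative (\<lambda>h. f' (h *\<^sub>R v))) (at t)"
    using diff_chain_at[OF assms(2)[unfolded has_vector_derivative_def] f'] by (simp add: o_def)
  moreover have "f' (h *\<^sub>R v) = f' v * h" for h
    using linear_scale[OF has_derivative_linear[OF f']] by simp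
  ultimately have "((\<lambda>s. f (c s)) has_real_derivative f' v) (at t)"
    by (simp add: has_field_derivative_def)
  then show ?thesis
    by (simp add: has_derivative_eq_sum_partials[OF f'])
qed

lemma has_real_derivative_component:
  assumes "(c has_vector_derivative v) (at t)"
  shows "((\<lambda>s. c s $ i) has_real_derivative v $ i) (at t)"
  using bounded_linear.has_vector_derivative[OF bounded_linear_vec_nth assms]
  by (simp add: has_real_derivative_iff_has_vector_derivative)

definition jacobian_matrix :: "(real^3 \<Rightarrow> real^3) \<Rightarrow> real^3 \<Rightarrow> real^3^3" where
  "jacobian_matrix a p = (\<chi> i k. partial k (\<lambda>q. a q $ i) p)"

lemma jacobian_matrix_mult_eq_sum_partials:
  "(jacobian_matrix a p *v v) $ i = (\<Sum>k\<in>UNIV. v $ k * partial k (\<lambda>q. a q $ i) p)"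
  by (simp add: jacobian_matrix_def matrix_vector_mult_def mult.commute)

lemma has_derivative_coordinate_function:
  fixes X :: "real \<Rightarrow> real" and p :: "real^'n"
  assumes "X differentiable (at (p $ i))"
  shows "((\<lambda>q. X (q $ i)) has_derivative (\<lambda>u. deriv X (p $ i) * u $ i)) (at p)"
proof -
  have "(X has_real_derivative deriv X (p $ i)) (at (p $ i))"
    using assms DERIV_deriv_iff_real_differentiable by blast
  from DERIV_compose_FDERIV[OF this bounded_linear.has_derivative[OF bounded_linear_vec_nth has_derivative_ident]]
  show ?thesis by (simp add: mult.commute)
qed

lemma has_derivative_cross3:
  assumes "(f has_derivative f') (at x within S)" and "(g has_derivative g') (at x within S)"
  shows "((\<lambda>x. f x \<times> g x) has_derivative (\<lambda>h. f' h \<times> g x + f x \<times> g' h)) (at x within S)"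
proof -
  have "bounded_bilinear cross3"
    using bilinear_conv_bounded_bilinear bilinear_cross by blast
  from bounded_bilinear.FDERIV[OF this assms] show ?thesis
    by (simp add: add.commute)
qed

section \<open>Christoffel symbols of a diagonal metric\<close>

lemma diag_mat_mult: "diag_mat a ** diag_mat b = diag_mat (a * b)"
  unfolding diag_mat_def matrix_matrix_mult_def
  by (simp add: vec_eq_iff if_distrib[of "\<lambda>x. x * _"] cong: if_cong)

lemma matrix_inv_diag_mat:
  fixes a :: "real^3"
  assumes "\<forall>i. a $ i \<noteq> 0"
  shows "matrix_inv (diag_mat a) = diag_mat (\<chi> i. 1 / a $ i)"
proof -
  let ?B = "diag_mat (\<chi> i. 1 / a $ i)"
  have one: "diag_mat 1 = (mat 1 :: real^3^3)"
    unfolding diag_mat_def mat_def by (simp add: vec_eq_iff)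
  have "a * (\<chi> i. 1 / a $ i) = 1" "(\<chi> i. 1 / a $ i) * a = 1"
    using assms by (simp_all add: vec_eq_iff)
  then have AB: "diag_mat a ** ?B = mat 1" and BA: "?B ** diag_mat a = mat 1"
    unfolding diag_mat_mult by (simp_all add: one)
  have uniq: "A' = ?B" if "diag_mat a ** A' = mat 1 \<and> A' ** diag_mat a = mat 1" for A' :: "real^3^3"
  proof -
    have "A' = A' ** (diag_mat a ** ?B)" using AB by simp
    also have "\<dots> = (A' ** diag_mat a) ** ?B" by (simp add: matrix_mul_assoc)
    finally show ?thesis using that by simp
  qed
  have "\<exists>A'. diag_mat a ** A' = mat 1 \<and> A' ** diag_mat a = mat 1"
    using AB BA by blast
  then have "diag_mat a ** matrix_inv (diag_mat a) = mat 1 \<and> matrix_inv (diag_mat a) ** diag_mat a = mat 1"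
    unfolding matrix_inv_def by (rule someI_ex)
  then show ?thesis by (rule uniq)
qed

lemma partial_diag_mat_entry:
  "partial i (\<lambda>q. diag_mat (a q) $ j $ l) p = (if j = l then partial i (\<lambda>q. a q $ j) p else 0)"
  by (simp add: diag_mat_def partial_def)

lemma christoffel_diag_mat:
  fixes a :: "real^3 \<Rightarrow> real^3"
  assumes "\<forall>l. a p $ l \<noteq> 0"
  shows "christoffel (\<lambda>q. diag_mat (a q)) k i j p =
    ((if j = k then partial i (\<lambda>q. a q $ k) p else 0) + (if i = k then partial j (\<lambda>q. a q $ k) p else 0)
      - (if i = j then partial k (\<lambda>q. a q $ i) p else 0)) / (2 * a p $ k)"
  unfolding christoffel_def partial_diag_mat_entry matrix_inv_diag_mat[OF assms]
  by (simp add: diag_mat_def if_distrib[of "\<lambda>x. x * _"] cong: if_cong)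

lemma christoffel_diag_mat_quadratic:
  fixes a :: "real^3 \<Rightarrow> real^3"
  assumes "\<forall>l. a p $ l \<noteq> 0"
  shows "(\<Sum>i\<in>UNIV. \<Sum>j\<in>UNIV. christoffel (\<lambda>q. diag_mat (a q)) k i j p * v $ i * v $ j)
    = (2 * (jacobian_matrix a p *v v) $ k * v $ k - (\<Sum>j\<in>UNIV. jacobian_matrix a p $ j $ k * (v $ j)^2)) / (2 * a p $ k)"
  using assms[rule_format, of k] exhaust_3[of k]
  unfolding christoffel_diag_mat[of a p, OF assms] jacobian_matrix_def matrix_vector_mult_def
  by (elim disjE) (simp_all add: sum_3 field_simps power2_eq_square)

section \<open>Quadratic first integrals and pregeodesics\<close>

(* w + \<Gamma>(v, v) for the diagonal metric with coefficients g, where Dg $ i $ k is the k-th partial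
   derivative of g $ i; see christoffel_diag_mat_quadratic. *)
definition diag_covariant_accel :: "real^3 \<Rightarrow> real^3^3 \<Rightarrow> real^3 \<Rightarrow> real^3 \<Rightarrow> real^3" where
  "diag_covariant_accel g Dg v w =
     (\<chi> k. w $ k + (2 * (Dg *v v) $ k * v $ k - (\<Sum>j\<in>UNIV. Dg $ j $ k * (v $ j)^2)) / (2 * g $ k))"

(* The left-hand side is the derivative of \<Sum>_i r_i g_i v_i^2 along a curve with velocity v and
   acceleration w. *)
lemma killing_quadratic_derivative:
  fixes g r v w :: "real^3" and Dg Dr :: "real^3^3"
  assumes g: "\<forall>i. g $ i \<noteq> 0"
    and killing: "\<forall>i k. Dr $ i $ k * g $ i = (r $ i - r $ k) * Dg $ i $ k"
  shows "(\<Sum>i\<in>UNIV. ((Dr *v v) $ i * g $ i + r $ i * (Dg *v v) $ i) * (v $ i)^2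
            + r $ i * g $ i * (2 * v $ i * w $ i))
       = 2 * (\<Sum>i\<in>UNIV. r $ i * g $ i * v $ i * diag_covariant_accel g Dg v w $ i)"
proof -
  have Dr: "(Dr *v v) $ i * g $ i = (\<Sum>k\<in>UNIV. (r $ i - r $ k) * Dg $ i $ k * v $ k)" for i
    unfolding matrix_vector_mult_def vec_lambda_beta sum_distrib_right
    by (intro sum.cong refl) (metis killing mult.commute mult.left_commute)
  have accel: "(\<Sum>i\<in>UNIV. r $ i * g $ i * v $ i * diag_covariant_accel g Dg v w $ i)
      = (\<Sum>i\<in>UNIV. r $ i * g $ i * v $ i * w $ i
          + r $ i * v $ i * (2 * (Dg *v v) $ i * v $ i - (\<Sum>j\<in>UNIV. Dg $ j $ i * (v $ j)^2)) / 2)"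
    using g by (intro sum.cong refl) (simp add: diag_covariant_accel_def field_simps)
  show ?thesis
    unfolding Dr accel
    by (simp add: sum_3 matrix_vector_mult_def field_simps power2_eq_square)
qed

lemma has_real_derivative_diag_quad_along_curve:
  fixes g r :: "real^3 \<Rightarrow> real^3"
  assumes diff: "\<forall>i. (\<lambda>q. g q $ i) differentiable (at (c t)) \<and> (\<lambda>q. r q $ i) differentiable (at (c t))"
    and c: "(c has_vector_derivative c' t) (at t)" and c': "(c' has_vector_derivative w) (at t)"
  shows "((\<lambda>s. diag_quad ((r (c s) - lam *\<^sub>R 1) * g (c s)) (c' s)) has_real_derivative
      (\<Sum>i\<in>UNIV. ((jacobian_matrix r (c t) *v c' t) $ i * g (c t) $ i
          + (r (c t) - lam *\<^sub>R 1) $ i * (jacobian_matrix g (c t) *v c' t) $ i) * (c' t $ i)^2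
        + (r (c t) - lam *\<^sub>R 1) $ i * g (c t) $ i * (2 * c' t $ i * w $ i))) (at t)"
  unfolding diag_quad_def
proof (rule DERIV_sum)
  fix i
  have r: "((\<lambda>s. r (c s) $ i) has_real_derivative (jacobian_matrix r (c t) *v c' t) $ i) (at t)"
    unfolding jacobian_matrix_mult_eq_sum_partials
    using has_real_derivative_along_curve[OF _ c] diff by blast
  have g: "((\<lambda>s. g (c s) $ i) has_real_derivative (jacobian_matrix g (c t) *v c' t) $ i) (at t)"
    unfolding jacobian_matrix_mult_eq_sum_partials
    using has_real_derivative_along_curve[OF _ c] diff by blast
  have sq: "((\<lambda>s. (c' s $ i)^2) has_real_derivative 2 * c' t $ i * w $ i) (at t)"
    using DERIV_power[OF has_real_derivative_component[OF c', of i], of 2] by (simp add: algebra_simps)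
  have "((\<lambda>s. (r (c s) $ i - lam) * g (c s) $ i * (c' s $ i)^2) has_real_derivative
      ((jacobian_matrix r (c t) *v c' t) $ i * g (c t) $ i
          + (r (c t) - lam *\<^sub>R 1) $ i * (jacobian_matrix g (c t) *v c' t) $ i) * (c' t $ i)^2
        + (r (c t) - lam *\<^sub>R 1) $ i * g (c t) $ i * (2 * c' t $ i * w $ i)) (at t)"
    by (rule DERIV_cong[OF DERIV_mult[OF DERIV_mult[OF DERIV_diff[OF r DERIV_const] g] sq]])
      (simp add: algebra_simps)
  then show "((\<lambda>s. ((r (c s) - lam *\<^sub>R 1) * g (c s)) $ i * (c' s $ i)^2) has_real_derivative
      ((jacobian_matrix r (c t) *v c' t) $ i * g (c t) $ i
          + (r (c t) - lam *\<^sub>R 1) $ i * (jacobian_matrix g (c t) *v c' t) $ i) * (c' t $ i)^2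
        + (r (c t) - lam *\<^sub>R 1) $ i * g (c t) $ i * (2 * c' t $ i * w $ i)) (at t)"
    by simp
qed

lemma killing_null_orthogonal_accel:
  fixes g r :: "real^3 \<Rightarrow> real^3"
  assumes I: "open I" "t \<in> I"
    and diff: "\<forall>i. (\<lambda>q. g q $ i) differentiable (at (c t)) \<and> (\<lambda>q. r q $ i) differentiable (at (c t))"
    and g_nz: "\<forall>i. g (c t) $ i \<noteq> 0"
    and killing: "\<forall>i k. jacobian_matrix r (c t) $ i $ k * g (c t) $ i
                      = (r (c t) $ i - r (c t) $ k) * jacobian_matrix g (c t) $ i $ k"
    and c: "(c has_vector_derivative c' t) (at t)" and c': "(c' has_vector_derivative c'' t) (at t)"
    and null: "\<And>s. s \<in> I \<Longrightarrow> diag_quad ((r (c s) - lam *\<^sub>R 1) * g (c s)) (c' s) = 0"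
  shows "((r (c t) - lam *\<^sub>R 1) * g (c t) * c' t)
           \<bullet> diag_covariant_accel (g (c t)) (jacobian_matrix g (c t)) (c' t) (c'' t) = 0"
proof -
  let ?\<rho> = "r (c t) - lam *\<^sub>R 1"
  note deriv = has_real_derivative_diag_quad_along_curve[OF diff c c', of lam]
  note zero = DERIV_unique[OF has_field_derivative_transform_within_open[OF deriv I null] DERIV_const]
  have "\<forall>i k. jacobian_matrix r (c t) $ i $ k * g (c t) $ i = (?\<rho> $ i - ?\<rho> $ k) * jacobian_matrix g (c t) $ i $ k"
    using killing by simp
  from killing_quadratic_derivative[OF g_nz this, of "c' t" "c'' t"] zero
  show ?thesis
    by (simp add: inner_vec_def mult.assoc)
qed

lemma cross_times_times:
  fixes a b v :: "real^3"
  shows "(a * v) \<times> (b * v) = vector [v $ 2 * v $ 3, v $ 3 * v $ 1, v $ 1 * v $ 2] * (a \<times> b)"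
  by (simp add: vec_eq_iff forall_3 cross_components algebra_simps)

lemma cross_times_times_nonzero:
  fixes a b v :: "real^3"
  assumes "\<forall>i. v $ i \<noteq> 0" and "a \<times> b \<noteq> 0"
  shows "(a * v) \<times> (b * v) \<noteq> 0"
proof
  assume "(a * v) \<times> (b * v) = 0"
  then have "v $ 2 * v $ 3 * (a \<times> b) $ 1 = 0" "v $ 3 * v $ 1 * (a \<times> b) $ 2 = 0"
      "v $ 1 * v $ 2 * (a \<times> b) $ 3 = 0"
    unfolding cross_times_times vec_eq_iff by (auto dest: spec[of _ 1] spec[of _ 2] spec[of _ 3])
  then have "a \<times> b = 0"
    using assms(1) by (simp add: vec_eq_iff forall_3)
  with assms(2) show False ..
qed

lemma parallel_if_orthogonal_to_cross:
  fixes A B v z :: "real^3"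
  assumes AB: "A \<times> B \<noteq> 0" and v: "A \<bullet> v = 0" "B \<bullet> v = 0" "v \<noteq> 0" and z: "A \<bullet> z = 0" "B \<bullet> z = 0"
  obtains a where "z = a *\<^sub>R v"
proof -
  let ?N = "A \<times> B"
  have v_eq: "v = ((?N \<bullet> v) / (?N \<bullet> ?N)) *\<^sub>R ?N"
    by (rule orthogonal_pair_imp_scaleR_cross[OF v(1,2) AB])
  have z_eq: "z = ((?N \<bullet> z) / (?N \<bullet> ?N)) *\<^sub>R ?N"
    by (rule orthogonal_pair_imp_scaleR_cross[OF z AB])
  have "?N \<bullet> v \<noteq> 0"
    using v_eq v(3) by auto
  then have "z = ((?N \<bullet> z) / (?N \<bullet> v)) *\<^sub>R v"
    using AB by (subst z_eq, subst (2) v_eq) simp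
  then show ?thesis by (rule that)
qed

lemma pregeodesic_diag_mat_if_killing_null:
  fixes g r s :: "real^3 \<Rightarrow> real^3" and c c' c'' :: "real \<Rightarrow> real^3"
  assumes I: "open I"
    and g_diff: "\<And>p i. p \<in> U \<Longrightarrow> (\<lambda>q. g q $ i) differentiable (at p)"
    and r_diff: "\<And>p i. p \<in> U \<Longrightarrow> (\<lambda>q. r q $ i) differentiable (at p)"
    and s_diff: "\<And>p i. p \<in> U \<Longrightarrow> (\<lambda>q. s q $ i) differentiable (at p)"
    and g_nz: "\<And>p i. p \<in> U \<Longrightarrow> g p $ i \<noteq> 0"
    and killing_r: "\<And>p i k. p \<in> U \<Longrightarrow>
                      jacobian_matrix r p $ i $ k * g p $ i = (r p $ i - r p $ k) * jacobian_matrix g p $ i $ k"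
    and killing_s: "\<And>p i k. p \<in> U \<Longrightarrow>
                      jacobian_matrix s p $ i $ k * g p $ i = (s p $ i - s p $ k) * jacobian_matrix g p $ i $ k"
    and curve: "\<And>t. t \<in> I \<Longrightarrow> c t \<in> U \<and> (c has_vector_derivative c' t) (at t)
                  \<and> (c' has_vector_derivative c'' t) (at t)
                  \<and> c' t \<in> diag_null_cone ((r (c t) - lam *\<^sub>R 1) * g (c t)) ((s (c t) - mu *\<^sub>R 1) * g (c t))"
    and coords: "\<And>t i. t \<in> I \<Longrightarrow> c' t $ i \<noteq> 0"
    and indep: "\<And>t. t \<in> I \<Longrightarrow> ((r (c t) - lam *\<^sub>R 1) * g (c t)) \<times> ((s (c t) - mu *\<^sub>R 1) * g (c t)) \<noteq> 0"
  shows "pregeodesic (\<lambda>p. diag_mat (g p)) I c c' c''"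
  unfolding pregeodesic_def
proof
  fix t assume t: "t \<in> I"
  let ?\<alpha> = "(r (c t) - lam *\<^sub>R 1) * g (c t)" and ?\<beta> = "(s (c t) - mu *\<^sub>R 1) * g (c t)"
  let ?acc = "diag_covariant_accel (g (c t)) (jacobian_matrix g (c t)) (c' t) (c'' t)"
  have U: "c t \<in> U" and c: "(c has_vector_derivative c' t) (at t)"
    and c': "(c' has_vector_derivative c'' t) (at t)" and null: "c' t \<in> diag_null_cone ?\<alpha> ?\<beta>"
    using curve[OF t] by blast+
  have null_r: "\<And>s. s \<in> I \<Longrightarrow> diag_quad ((r (c s) - lam *\<^sub>R 1) * g (c s)) (c' s) = 0"
    and null_s: "\<And>s'. s' \<in> I \<Longrightarrow> diag_quad ((s (c s') - mu *\<^sub>R 1) * g (c s')) (c' s') = 0"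
    using curve by (auto simp: diag_null_cone_def)
  have "(?\<alpha> * c' t) \<bullet> ?acc = 0"
    using g_diff r_diff g_nz killing_r U
    by (intro killing_null_orthogonal_accel[where g = g and r = r and lam = lam and c = c
          and c' = c' and c'' = c'', OF I t _ _ _ c c' null_r]) blast+
  moreover have "(?\<beta> * c' t) \<bullet> ?acc = 0"
    using g_diff s_diff g_nz killing_s U
    by (intro killing_null_orthogonal_accel[where g = g and r = s and lam = mu and c = c
          and c' = c' and c'' = c'', OF I t _ _ _ c c' null_s]) blast+
  moreover have "(?\<alpha> * c' t) \<bullet> c' t = 0" "(?\<beta> * c' t) \<bullet> c' t = 0"
    using null by (simp_all add: diag_null_cone_def diag_quad_def inner_vec_def power2_eq_square mult.assoc)
  moreover have "(?\<alpha> * c' t) \<times> (?\<beta> * c' t) \<noteq> 0"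
    using coords[OF t] indep[OF t] cross_times_times_nonzero[of "c' t" ?\<alpha> ?\<beta>] by blast
  moreover have "c' t \<noteq> 0"
    using null by (simp add: diag_null_cone_def)
  ultimately obtain a where a: "?acc = a *\<^sub>R c' t"
    by (metis parallel_if_orthogonal_to_cross)
  have "c'' t $ k + (\<Sum>i\<in>UNIV. \<Sum>j\<in>UNIV. christoffel (\<lambda>p. diag_mat (g p)) k i j (c t) * c' t $ i * c' t $ j)
      = ?acc $ k" for k
    unfolding christoffel_diag_mat_quadratic[of g "c t", OF allI[OF g_nz[OF U]]]
    by (simp add: diag_covariant_accel_def)
  then show "\<exists>a. \<forall>k. c'' t $ k + (\<Sum>i\<in>UNIV. \<Sum>j\<in>UNIV. christoffel (\<lambda>p. diag_mat (g p)) k i j (c t) * c' t $ i * c' t $ j)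
          = a * c' t $ k"
    using a by auto
qed

section \<open>Staeckel systems\<close>

definition staeckel_col :: "(real \<Rightarrow> real) \<Rightarrow> (real \<Rightarrow> real) \<Rightarrow> (real \<Rightarrow> real) \<Rightarrow> real^3 \<Rightarrow> real^3" where
  "staeckel_col X Y Z p = vector [X (p$1), Y (p$2), Z (p$3)]"

definition staeckel_col_deriv ::
    "(real \<Rightarrow> real) \<Rightarrow> (real \<Rightarrow> real) \<Rightarrow> (real \<Rightarrow> real) \<Rightarrow> real^3 \<Rightarrow> real^3 \<Rightarrow> real^3" where
  "staeckel_col_deriv X Y Z p u = vector [deriv X (p$1) * u$1, deriv Y (p$2) * u$2, deriv Z (p$3) * u$3]"

lemma vector_3_eq_sum_axis:
  "vector [x, y, z] = x *\<^sub>R axis 1 1 + y *\<^sub>R axis 2 1 + (z *\<^sub>R axis 3 1 :: real^3)"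
  by (simp add: vec_eq_iff forall_3 axis_def)

lemma has_derivative_staeckel_col:
  assumes "X differentiable (at (p$1))" "Y differentiable (at (p$2))" "Z differentiable (at (p$3))"
  shows "(staeckel_col X Y Z has_derivative staeckel_col_deriv X Y Z p) (at p)"
  unfolding staeckel_col_def[abs_def] staeckel_col_deriv_def[abs_def] vector_3_eq_sum_axis
  by (intro has_derivative_add has_derivative_scaleR_left has_derivative_coordinate_function assms)

lemma staeckel_col_deriv_axis:
  "staeckel_col_deriv X Y Z p (axis k 1) = (vector [deriv X (p$1), deriv Y (p$2), deriv Z (p$3)] $ k) *\<^sub>R axis k 1"
  using exhaust_3[of k] by (auto simp: staeckel_col_deriv_def vec_eq_iff forall_3 axis_def)

(* Differentiating in the direction of the k-th coordinate changes only the k-th entries of the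
   columns e, a, b. *)
lemma staeckel_identity:
  fixes e a b :: "real^3" and \<epsilon> \<alpha> \<beta> :: real and i k :: 3
  defines "e' \<equiv> \<epsilon> *\<^sub>R axis k 1" and "a' \<equiv> \<alpha> *\<^sub>R axis k 1" and "b' \<equiv> \<beta> *\<^sub>R axis k 1"
  defines "C \<equiv> a \<times> b" and "C' \<equiv> a' \<times> b + a \<times> b'"
  defines "\<Delta> \<equiv> e \<bullet> C" and "\<Delta>' \<equiv> e' \<bullet> C + e \<bullet> C'"
  shows "((b' \<times> e + b \<times> e') $ i * C $ i - (b \<times> e) $ i * C' $ i) * \<Delta> * C $ k
           = ((b \<times> e) $ i * C $ k - (b \<times> e) $ k * C $ i) * (\<Delta>' * C $ i - \<Delta> * C' $ i)"
    and "((e' \<times> a + e \<times> a') $ i * C $ i - (e \<times> a) $ i * C' $ i) * \<Delta> * C $ k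
           = ((e \<times> a) $ i * C $ k - (e \<times> a) $ k * C $ i) * (\<Delta>' * C $ i - \<Delta> * C' $ i)"
  unfolding assms
proof (goal_cases)
  case 1
  show ?case using exhaust_3[of i] exhaust_3[of k]
    by (elim disjE) (simp_all add: cross_components inner_vec_def sum_3 axis_def algebra_simps)
next
  case 2
  show ?case using exhaust_3[of i] exhaust_3[of k]
    by (elim disjE) (simp_all add: cross_components inner_vec_def sum_3 axis_def algebra_simps)
qed

lemma divide_killing_condition:
  fixes c c' dn n n' d dd dc :: real
  assumes "c \<noteq> 0" "c' \<noteq> 0" "(dn * c - n * dc) * d * c' = (n * c' - n' * c) * (dd * c - d * dc)"
  shows "(dn * c - n * dc) / (c * c) * (d / c) = (n / c - n' / c') * ((dd * c - d * dc) / (c * c))"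
proof -
  have "(dn * c - n * dc) / (c * c) * (d / c) = ((dn * c - n * dc) * d * c') / (c * c * c * c')"
    using assms by (simp add: field_simps)
  also have "\<dots> = ((n * c' - n' * c) * (dd * c - d * dc)) / (c * c * c * c')"
    using assms(3) by simp
  also have "\<dots> = (n / c - n' / c') * ((dd * c - d * dc) / (c * c))"
    using assms by (simp add: field_simps)
  finally show ?thesis .
qed

context
  fixes E F G K L M P Q R :: "real \<Rightarrow> real"
begin

(* staeckel_det is the determinant of the Staeckel matrix with columns (E,F,G), (K,L,M), (P,Q,R);
   staeckel_cof and the two cross products in staeckel_ratio2/3 are staeckel_det times the rows of
   its inverse. *)
definition staeckel_cof :: "real^3 \<Rightarrow> real^3" where
  "staeckel_cof p = staeckel_col K L M p \<times> staeckel_col P Q R p"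

definition staeckel_det :: "real^3 \<Rightarrow> real" where
  "staeckel_det p = staeckel_col E F G p \<bullet> staeckel_cof p"

definition staeckel_metric :: "real^3 \<Rightarrow> real^3" where
  "staeckel_metric p = (\<chi> i. staeckel_det p / staeckel_cof p $ i)"

definition staeckel_ratio2 :: "real^3 \<Rightarrow> real^3" where
  "staeckel_ratio2 p = (\<chi> i. (staeckel_col P Q R p \<times> staeckel_col E F G p) $ i / staeckel_cof p $ i)"

definition staeckel_ratio3 :: "real^3 \<Rightarrow> real^3" where
  "staeckel_ratio3 p = (\<chi> i. (staeckel_col E F G p \<times> staeckel_col K L M p) $ i / staeckel_cof p $ i)"

lemma staeckel_cof_components:
  "staeckel_cof p $ 1 = L (p$2) * R (p$3) - M (p$3) * Q (p$2)"
  "staeckel_cof p $ 2 = M (p$3) * P (p$1) - K (p$1) * R (p$3)"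
  "staeckel_cof p $ 3 = K (p$1) * Q (p$2) - L (p$2) * P (p$1)"
  by (simp_all add: staeckel_cof_def staeckel_col_def cross_components)

lemma Delta_eq_staeckel_det: "Delta E F G K L M P Q R p = staeckel_det p"
  by (simp add: Delta_def Let_def staeckel_det_def inner_vec_def sum_3 staeckel_cof_components
      staeckel_col_def algebra_simps)

lemma g_coeff_eq_staeckel_metric: "g_coeff E F G K L M P Q R p = staeckel_metric p"
  by (simp add: g_coeff_def Let_def staeckel_metric_def Delta_eq_staeckel_det staeckel_cof_components
      vec_eq_iff forall_3)

lemma I2_coeff_eq: "I2_coeff E F G K L M P Q R p = staeckel_ratio2 p * staeckel_metric p"
  by (simp add: I2_coeff_def Let_def staeckel_ratio2_def staeckel_metric_def Delta_eq_staeckel_det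
      staeckel_cof_components staeckel_col_def cross_components vec_eq_iff forall_3 power2_eq_square)

lemma I3_coeff_eq: "I3_coeff E F G K L M P Q R p = staeckel_ratio3 p * staeckel_metric p"
  by (simp add: I3_coeff_def Let_def staeckel_ratio3_def staeckel_metric_def Delta_eq_staeckel_det
      staeckel_cof_components staeckel_col_def cross_components vec_eq_iff forall_3 power2_eq_square)

definition staeckel_differentiable :: "real^3 \<Rightarrow> bool" where
  "staeckel_differentiable p \<longleftrightarrow>
     E differentiable (at (p$1)) \<and> K differentiable (at (p$1)) \<and> P differentiable (at (p$1)) \<and>
     F differentiable (at (p$2)) \<and> L differentiable (at (p$2)) \<and> Q differentiable (at (p$2)) \<and>
     G differentiable (at (p$3)) \<and> M differentiable (at (p$3)) \<and> R differentiable (at (p$3))"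

lemma has_derivative_staeckel_cols:
  assumes "staeckel_differentiable p"
  shows "(staeckel_col E F G has_derivative staeckel_col_deriv E F G p) (at p)"
    and "(staeckel_col K L M has_derivative staeckel_col_deriv K L M p) (at p)"
    and "(staeckel_col P Q R has_derivative staeckel_col_deriv P Q R p) (at p)"
  using assms unfolding staeckel_differentiable_def by (auto intro: has_derivative_staeckel_col)

definition staeckel_cof_deriv :: "real^3 \<Rightarrow> real^3 \<Rightarrow> real^3" where
  "staeckel_cof_deriv p u = staeckel_col_deriv K L M p u \<times> staeckel_col P Q R p
                          + staeckel_col K L M p \<times> staeckel_col_deriv P Q R p u"

definition staeckel_det_deriv :: "real^3 \<Rightarrow> real^3 \<Rightarrow> real" where
  "staeckel_det_deriv p u = staeckel_col_deriv E F G p u \<bullet> staeckel_cof p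
                          + staeckel_col E F G p \<bullet> staeckel_cof_deriv p u"

lemma has_derivative_staeckel_cof:
  assumes "staeckel_differentiable p"
  shows "((\<lambda>q. staeckel_cof q $ i) has_derivative (\<lambda>u. staeckel_cof_deriv p u $ i)) (at p)"
  unfolding staeckel_cof_def[abs_def] staeckel_cof_deriv_def
  using has_derivative_staeckel_cols[OF assms]
  by (intro bounded_linear.has_derivative[OF bounded_linear_vec_nth] has_derivative_cross3)

lemma has_derivative_staeckel_det:
  assumes "staeckel_differentiable p"
  shows "(staeckel_det has_derivative staeckel_det_deriv p) (at p)"
proof -
  have "((\<lambda>q. staeckel_col E F G q \<bullet> staeckel_cof q) has_derivative
      (\<lambda>u. staeckel_col E F G p \<bullet> staeckel_cof_deriv p u + staeckel_col_deriv E F G p u \<bullet> staeckel_cof p)) (at p)"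
    unfolding staeckel_cof_def[abs_def] staeckel_cof_deriv_def
    using has_derivative_staeckel_cols[OF assms]
    by (intro has_derivative_inner has_derivative_cross3)
  then show ?thesis
    unfolding staeckel_det_def[abs_def] staeckel_det_deriv_def[abs_def] by (simp add: add.commute)
qed

definition staeckel_regular :: "real^3 \<Rightarrow> bool" where
  "staeckel_regular p \<longleftrightarrow>
     staeckel_differentiable p \<and> staeckel_det p \<noteq> 0 \<and> (\<forall>i. staeckel_cof p $ i \<noteq> 0)"

lemma staeckel_metric_nonzero: "staeckel_regular p \<Longrightarrow> staeckel_metric p $ i \<noteq> 0"
  by (simp add: staeckel_regular_def staeckel_metric_def)

lemma staeckel_metric_differentiable:
  assumes "staeckel_regular p"
  shows "(\<lambda>q. staeckel_metric q $ i) differentiable (at p)"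
    and "(\<lambda>q. staeckel_ratio2 q $ i) differentiable (at p)"
    and "(\<lambda>q. staeckel_ratio3 q $ i) differentiable (at p)"
  unfolding staeckel_metric_def staeckel_ratio2_def staeckel_ratio3_def vec_lambda_beta
proof (goal_cases)
  have diff: "staeckel_differentiable p" and cof: "staeckel_cof p $ i \<noteq> 0"
    using assms by (simp_all add: staeckel_regular_def)
  note cols = has_derivative_staeckel_cols[OF diff]
  note quotient = has_derivative_divide'[OF _ has_derivative_staeckel_cof[OF diff] cof, THEN differentiableI]
  note num' = bounded_linear.has_derivative[OF bounded_linear_vec_nth has_derivative_cross3]
  case 1 show ?case by (rule quotient[OF has_derivative_staeckel_det[OF diff]])
  case 2 show ?case by (rule quotient[OF num'[OF cols(3,1)]])
  case 3 show ?case by (rule quotient[OF num'[OF cols(1,2)]])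
qed

lemma jacobian_staeckel_quotients:
  assumes diff: "staeckel_differentiable p" and cof: "staeckel_cof p $ i \<noteq> 0"
  shows "jacobian_matrix staeckel_metric p $ i $ k
      = (staeckel_det_deriv p (axis k 1) * staeckel_cof p $ i - staeckel_det p * staeckel_cof_deriv p (axis k 1) $ i)
        / (staeckel_cof p $ i * staeckel_cof p $ i)"
    and "jacobian_matrix staeckel_ratio2 p $ i $ k
      = ((staeckel_col_deriv P Q R p (axis k 1) \<times> staeckel_col E F G p
            + staeckel_col P Q R p \<times> staeckel_col_deriv E F G p (axis k 1)) $ i * staeckel_cof p $ i
          - (staeckel_col P Q R p \<times> staeckel_col E F G p) $ i * staeckel_cof_deriv p (axis k 1) $ i)
        / (staeckel_cof p $ i * staeckel_cof p $ i)"
    and "jacobian_matrix staeckel_ratio3 p $ i $ k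
      = ((staeckel_col_deriv E F G p (axis k 1) \<times> staeckel_col K L M p
            + staeckel_col E F G p \<times> staeckel_col_deriv K L M p (axis k 1)) $ i * staeckel_cof p $ i
          - (staeckel_col E F G p \<times> staeckel_col K L M p) $ i * staeckel_cof_deriv p (axis k 1) $ i)
        / (staeckel_cof p $ i * staeckel_cof p $ i)"
  unfolding jacobian_matrix_def staeckel_metric_def staeckel_ratio2_def staeckel_ratio3_def vec_lambda_beta
proof (goal_cases)
  note cols = has_derivative_staeckel_cols[OF diff]
  note quotient = partial_divide[OF _ has_derivative_staeckel_cof[OF diff] cof]
  note num' = bounded_linear.has_derivative[OF bounded_linear_vec_nth has_derivative_cross3]
  case 1 show ?case by (rule quotient[OF has_derivative_staeckel_det[OF diff]])
  case 2 show ?case by (rule quotient[OF num'[OF cols(3,1)]])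
  case 3 show ?case by (rule quotient[OF num'[OF cols(1,2)]])
qed

lemma staeckel_killing:
  assumes "staeckel_regular p"
  shows "jacobian_matrix staeckel_ratio2 p $ i $ k * staeckel_metric p $ i
           = (staeckel_ratio2 p $ i - staeckel_ratio2 p $ k) * jacobian_matrix staeckel_metric p $ i $ k"
    and "jacobian_matrix staeckel_ratio3 p $ i $ k * staeckel_metric p $ i
           = (staeckel_ratio3 p $ i - staeckel_ratio3 p $ k) * jacobian_matrix staeckel_metric p $ i $ k"
proof -
  have diff: "staeckel_differentiable p" and cof: "\<And>i. staeckel_cof p $ i \<noteq> 0"
    using assms by (simp_all add: staeckel_regular_def)
  note jac = jacobian_staeckel_quotients[OF diff cof]
  show "jacobian_matrix staeckel_ratio2 p $ i $ k * staeckel_metric p $ i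
           = (staeckel_ratio2 p $ i - staeckel_ratio2 p $ k) * jacobian_matrix staeckel_metric p $ i $ k"
    unfolding jac unfolding staeckel_metric_def staeckel_ratio2_def vec_lambda_beta
    by (rule divide_killing_condition[OF cof cof])
      (unfold staeckel_cof_deriv_def staeckel_det_deriv_def staeckel_det_def staeckel_cof_def
        staeckel_col_deriv_axis, rule staeckel_identity(1))
  show "jacobian_matrix staeckel_ratio3 p $ i $ k * staeckel_metric p $ i
           = (staeckel_ratio3 p $ i - staeckel_ratio3 p $ k) * jacobian_matrix staeckel_metric p $ i $ k"
    unfolding jac unfolding staeckel_metric_def staeckel_ratio3_def vec_lambda_beta
    by (rule divide_killing_condition[OF cof cof])
      (unfold staeckel_cof_deriv_def staeckel_det_deriv_def staeckel_det_def staeckel_cof_def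
        staeckel_col_deriv_axis, rule staeckel_identity(2))
qed

end

theorem proposition1:
  fixes E F G K L M P Q R :: "real \<Rightarrow> real"
    and U :: "(real^3) set" and lam mu :: real
  defines "Gm \<equiv> (\<lambda>p. diag_mat (g_coeff E F G K L M P Q R p))"
    and "Dirs \<equiv> (\<lambda>p. {v::real^3. v \<noteq> 0 \<and>
            diag_quad (I2_coeff E F G K L M P Q R p) v - lam * diag_quad (g_coeff E F G K L M P Q R p) v = 0 \<and>
            diag_quad (I3_coeff E F G K L M P Q R p) v - mu * diag_quad (g_coeff E F G K L M P Q R p) v = 0})"
  assumes U_open: "open U"
    and smooth_x: "smooth_on ((\<lambda>p. p$1) ` U) E" "smooth_on ((\<lambda>p. p$1) ` U) K" "smooth_on ((\<lambda>p. p$1) ` U) P"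
    and smooth_y: "smooth_on ((\<lambda>p. p$2) ` U) F" "smooth_on ((\<lambda>p. p$2) ` U) L" "smooth_on ((\<lambda>p. p$2) ` U) Q"
    and smooth_z: "smooth_on ((\<lambda>p. p$3) ` U) G" "smooth_on ((\<lambda>p. p$3) ` U) M" "smooth_on ((\<lambda>p. p$3) ` U) R"
    and Delta_nz: "\<forall>p\<in>U. Delta E F G K L M P Q R p \<noteq> 0"
    and den_nz: "\<forall>p\<in>U. L (p$2) * R (p$3) - M (p$3) * Q (p$2) \<noteq> 0 \<and>
                        M (p$3) * P (p$1) - K (p$1) * R (p$3) \<noteq> 0 \<and>
                        K (p$1) * Q (p$2) - L (p$2) * P (p$1) \<noteq> 0"
    and four_dirs: "\<forall>p\<in>U. card ((\<lambda>v. span {v}) ` Dirs p) = 4"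
  shows
    "(\<forall>I c c' c''. is_interval I \<and> open I \<and>
        (\<forall>t\<in>I. c t \<in> U \<and> (c has_vector_derivative c' t) (at t) \<and>
                (c' has_vector_derivative c'' t) (at t) \<and> c' t \<in> Dirs (c t))
        \<longrightarrow> pregeodesic Gm I c c' c'')
     \<and> (\<forall>p\<in>U. \<forall>i j. i \<noteq> j \<longrightarrow>
          (\<forall>n1\<in>g_perp Gm p (coord_plane i). \<forall>n2\<in>g_perp Gm p (coord_plane j). bilin Gm p n1 n2 = 0))
     \<and> (\<forall>p\<in>U. \<forall>v\<in>Dirs p.
          (\<lambda>i. span {g_reflect Gm p (coord_plane i) v}) ` UNIV = (\<lambda>w. span {w}) ` Dirs p - {span {v}})
     \<and> (\<forall>i. integrable_distribution U (\<lambda>p. coord_plane i))"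
proof -
  let ?g = "staeckel_metric E F G K L M P Q R" and ?r2 = "staeckel_ratio2 E F G K L M P Q R"
    and ?r3 = "staeckel_ratio3 E F G K L M P Q R"
  have Gm: "Gm = (\<lambda>p. diag_mat (?g p))"
    unfolding Gm_def g_coeff_eq_staeckel_metric ..
  have Dirs: "Dirs p = diag_null_cone ((?r2 p - lam *\<^sub>R 1) * ?g p) ((?r3 p - mu *\<^sub>R 1) * ?g p)" for p
    unfolding Dirs_def diag_null_cone_def diag_quad_diff I2_coeff_eq I3_coeff_eq g_coeff_eq_staeckel_metric
    by (simp add: algebra_simps)
  have reg: "staeckel_regular E F G K L M P Q R p" if "p \<in> U" for p
    using that Delta_nz den_nz smooth_x smooth_y smooth_z
    by (simp add: staeckel_regular_def staeckel_differentiable_def Delta_eq_staeckel_det[symmetric]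
        forall_3 staeckel_cof_components smooth_on_imp_differentiable)
  note four = four_dirs[unfolded Dirs, rule_format]
  note coords = four_diag_null_cone_lines(2)[OF four, rule_format]
  note indep = four_diag_null_cone_lines_independent[OF four]
  show ?thesis
  proof (intro conjI allI impI ballI, goal_cases)
    case (1 I c c' c'')
    then show ?case unfolding Gm
      by (intro pregeodesic_diag_mat_if_killing_null[where U = U, OF _ staeckel_metric_differentiable[OF reg]
            staeckel_metric_nonzero[OF reg] staeckel_killing[OF reg]])
        (use coords indep in \<open>auto simp: Dirs\<close>)
  next
    case (2 p i j n1 n2)
    then show ?case
      unfolding Gm by (intro g_perp_coord_planes_orthogonal[of ?g, OF allI]) (simp_all add: staeckel_metric_nonzero reg)
  next
    case (3 p v)
    have "g_reflect Gm p (coord_plane i) v = flip_coord i v" for i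
      unfolding Gm by (rule g_reflect_coord_plane[of ?g, OF allI]) (simp add: staeckel_metric_nonzero reg 3)
    then show ?case
      using four_diag_null_cone_lines(1)[OF four[OF 3(1)]] 3(2) unfolding Dirs by simp
  next
    case (4 i)
    show ?case by (rule integrable_distribution_coord_plane[OF U_open])
  qed
qed

end
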